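(* Let $F\ge2$ and $K\ge1$ be integers, and write $K=\ell F+i$ with integers $\ell\ge0$ and $0\le i<F$. Then $$s(F,K,1)=\frac{\ell F(F-1)}{2}+\frac{i(i-1)}{2}+i(F-i).$$
   Context: A placement delivery array $S$-PDA$(F,K,Z)$ is an $F\times K$ array $R=(r_{j,k})$, $1\le j\le F$, $1\le k\le K$, over a finite set $S$ such that: (1) each cell is either empty or contains an element of $S$; (2) each column contains exactly $Z$ empty cells; (3) each element of $S$ occurs at most once in each row and at most once in each column; (4) if two distinct nonempty cells satisfy $r_{j_1,k_1}=r_{j_2,k_2}=t\in S$, then the cells $r_{j_1,k_2}$ and $r_{j_2,k_1}$ are empty. For integers $F,K\ge1$, $0\le Z\le F$, define $s(F,K,Z)=\min\{|S| : \text{there exists an } S\text{-PDA}(F,K,Z)\}$. *)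

theory Defs
  imports Complex_Main
begin

text \<open>An F x K array over S: rows 0..<F, columns 0..<K; a cell is None (empty) or Some t.\<close>

definition is_PDA :: "'a set \<Rightarrow> nat \<Rightarrow> nat \<Rightarrow> nat \<Rightarrow> (nat \<Rightarrow> nat \<Rightarrow> 'a option) \<Rightarrow> bool" where
  "is_PDA S F K Z R \<longleftrightarrow>
     finite S \<and>
     (\<forall>j<F. \<forall>k<K. \<forall>t. R j k = Some t \<longrightarrow> t \<in> S) \<and>
     (\<forall>k<K. card {j. j < F \<and> R j k = None} = Z) \<and>
     (\<forall>t\<in>S. \<forall>j<F. \<forall>k1<K. \<forall>k2<K. R j k1 = Some t \<and> R j k2 = Some t \<longrightarrow> k1 = k2) \<and>
     (\<forall>t\<in>S. \<forall>k<K. \<forall>j1<F. \<forall>j2<F. R j1 k = Some t \<and> R j2 k = Some t \<longrightarrow> j1 = j2) \<and>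
     (\<forall>j1<F. \<forall>j2<F. \<forall>k1<K. \<forall>k2<K. \<forall>t.
        (j1, k1) \<noteq> (j2, k2) \<and> R j1 k1 = Some t \<and> R j2 k2 = Some t
        \<longrightarrow> R j1 k2 = None \<and> R j2 k1 = None)"

text \<open>s(F,K,Z): minimal number of symbols; symbol sets are taken inside nat w.l.o.g.\<close>
definition s_PDA :: "nat \<Rightarrow> nat \<Rightarrow> nat \<Rightarrow> nat" where
  "s_PDA F K Z = (LEAST n. \<exists>(S::nat set) R. is_PDA S F K Z R \<and> card S = n)"

end

theory Submission
  imports Defs "HOL-Number_Theory.Cong" "HOL-Library.Nat_Bijection"
begin

text \<open>
  With one empty cell per column, every column k has a gap row gap k, and by the cross condition
  two occurrences of a symbol in columns k1 < k2 lie in rows gap k2 and gap k1; hence a symbol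
  occurs at most twice, and the number of symbols is at least the K(F-1) filled cells minus the
  number of matched pairs.  A matched pair is determined by its cell in the column whose gap is j,
  where {j, j'} are the gaps of its columns; so if a_j columns have gap j, there are at most
  min(a_j, a_j') pairs with gaps {j, j'}.  Lowering every positive a_j by one shows by induction
  that the sum of these minima is at most the sum of m mod F over m < K, which equals
  lF(F-1)/2 + i(i-1)/2.  The cyclic array below attains the bound.
\<close>

definition mod_sum :: "nat \<Rightarrow> nat \<Rightarrow> nat" where
  "mod_sum F K = (\<Sum>m<K. m mod F)"

lemma mod_sum_add: "mod_sum F (K + n) = mod_sum F K + (\<Sum>m<n. (K + m) mod F)"
  by (induction n) (auto simp: mod_sum_def)

lemma mod_sum_mult_add:
  assumes "r \<le> F"
  shows "mod_sum F (q * F + r) = q * (\<Sum>m<F. m) + (\<Sum>m<r. m)"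
proof -
  have block: "(\<Sum>m<n. (q * F + m) mod F) = (\<Sum>m<n. m)" if "n \<le> F" for q n
    by (rule sum.cong) (use that in auto)
  have "mod_sum F (q * F) = q * (\<Sum>m<F. m)" for q
  proof (induction q)
    case (Suc q)
    then show ?case
      using mod_sum_add[of F "q * F" F] block[of F q] by (simp add: add.commute)
  qed (simp add: mod_sum_def)
  then show ?thesis
    using mod_sum_add[of F "q * F" r] block[OF assms] by simp
qed

lemma mod_sum_le: "0 < F \<Longrightarrow> mod_sum F K \<le> K * (F - 1)"
  using sum_mono[of "{..<K}" "\<lambda>m. m mod F" "\<lambda>_. F - 1"]
  by (simp add: mod_sum_def less_Suc_eq_le[symmetric])

lemma real_sum_lessThan: "real (\<Sum>m<n. m) = real n * (real n - 1) / 2"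
  by (induction n) (simp_all add: field_simps)

lemma real_mod_sum:
  assumes "i < F"
  shows "real (mod_sum F (l * F + i)) = real l * real F * (real F - 1) / 2 + real i * (real i - 1) / 2"
proof -
  have "real (mod_sum F (l * F + i)) = real l * real (\<Sum>m<F. m) + real (\<Sum>m<i. m)"
    using mod_sum_mult_add[of i F l] assms by (simp del: of_nat_sum)
  then show ?thesis
    unfolding real_sum_lessThan by simp
qed

lemma sum_lessThan_card_le:
  fixes B :: "nat set"
  assumes "finite B"
  shows "(\<Sum>y<card B. y) \<le> \<Sum>B"
  using assms
proof (induction B rule: finite_ranking_induct[where f = id])
  case (insert x B)
  show ?case
  proof (cases "x \<in> B")
    case False
    have "card B \<le> x"
    proof -
      have "B \<subseteq> {..<x}" using insert.hyps(2) False by (force simp: order_le_less)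
      then show ?thesis using card_mono[of "{..<x}" B] by simp
    qed
    then show ?thesis using insert False by simp
  qed (use insert in \<open>simp add: insert_absorb\<close>)
qed simp

definition less_pairs :: "nat set \<Rightarrow> (nat \<times> nat) set" where
  "less_pairs A = {(x, y). x \<in> A \<and> y \<in> A \<and> x < y}"

lemma finite_less_pairs: "finite A \<Longrightarrow> finite (less_pairs A)"
  by (rule finite_subset[of _ "A \<times> A"]) (auto simp: less_pairs_def)

lemma card_less_pairs:
  assumes "finite A"
  shows "card (less_pairs A) = (\<Sum>y<card A. y)"
  using assms
proof (induction A rule: finite_ranking_induct[where f = id])
  case (insert x A)
  show ?case
  proof (cases "x \<in> A")
    case False
    have max: "y < x" if "y \<in> A" for y
      using insert.hyps(2)[OF that] False that by (auto simp: order_le_less)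
    have "less_pairs (insert x A) = less_pairs A \<union> (\<lambda>y. (y, x)) ` A"
      unfolding less_pairs_def by (auto dest: max)
    moreover have "less_pairs A \<inter> (\<lambda>y. (y, x)) ` A = {}"
      using False by (auto simp: less_pairs_def)
    ultimately have "card (less_pairs (insert x A)) = card (less_pairs A) + card A"
      using insert.hyps by (simp add: card_Un_disjoint finite_less_pairs card_image inj_on_def)
    then show ?thesis using insert False by simp
  qed (use insert in \<open>simp add: insert_absorb\<close>)
qed (simp add: less_pairs_def)

lemma sum_mod_consecutive_ge:
  fixes K F :: nat
  assumes "n \<le> F"
  shows "(\<Sum>y<n. y) \<le> (\<Sum>m<n. (K + m) mod F)"
proof -
  have inj: "inj_on (\<lambda>m. (K + m) mod F) {..<n}"
  proof (rule inj_onI)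
    fix x y assume "x \<in> {..<n}" "y \<in> {..<n}" "(K + x) mod F = (K + y) mod F"
    then show "x = y"
      using assms cong_add_lcancel_nat[of K x y F] cong_less_modulus_unique_nat[of x y F]
      by (simp add: cong_def)
  qed
  show ?thesis
    using sum_lessThan_card_le[of "(\<lambda>m. (K + m) mod F) ` {..<n}"]
    by (simp add: card_image[OF inj] sum.reindex[OF inj])
qed

lemma sum_min_less_pairs_le_mod_sum:
  fixes a :: "nat \<Rightarrow> nat"
  shows "(\<Sum>(j, j')\<in>less_pairs {..<F}. min (a j) (a j')) \<le> mod_sum F (\<Sum>j<F. a j)"
proof (induction "\<Sum>j<F. a j" arbitrary: a rule: less_induct)
  case less
  define A where "A = {j. j < F \<and> 0 < a j}"
  show ?case
  proof (cases "A = {}")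
    case True
    then have "\<forall>(j, j')\<in>less_pairs {..<F}. min (a j) (a j') = 0"
      by (auto simp: A_def less_pairs_def)
    then have "(\<Sum>(j, j')\<in>less_pairs {..<F}. min (a j) (a j')) = 0"
      by (simp add: sum.neutral split_beta)
    then show ?thesis by simp
  next
    case False
    define a' where "a' j = a j - 1" for j
    have A_sub: "A \<subseteq> {..<F}" by (auto simp: A_def)
    then have "finite A" "card A \<le> F" using finite_subset card_mono[OF _ A_sub] by auto
    have total: "(\<Sum>j<F. a j) = (\<Sum>j<F. a' j) + card A"
    proof -
      have "(\<Sum>j<F. a j) = (\<Sum>j<F. a' j + (if j \<in> A then 1 else 0))"
        by (rule sum.cong) (auto simp: a'_def A_def)
      also have "\<dots> = (\<Sum>j<F. a' j) + card A"
        using A_sub by (simp add: sum.distrib sum.If_cases Int_absorb1)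
      finally show ?thesis .
    qed
    have mins: "(\<Sum>(j, j')\<in>less_pairs {..<F}. min (a j) (a j'))
        = (\<Sum>(j, j')\<in>less_pairs {..<F}. min (a' j) (a' j')) + card (less_pairs A)"
    proof -
      have "(\<Sum>(j, j')\<in>less_pairs {..<F}. min (a j) (a j'))
          = (\<Sum>p\<in>less_pairs {..<F}. (case p of (j, j') \<Rightarrow> min (a' j) (a' j'))
              + (if p \<in> less_pairs A then 1 else 0))"
        by (rule sum.cong) (auto simp: a'_def A_def less_pairs_def)
      moreover have "less_pairs {..<F} \<inter> less_pairs A = less_pairs A"
        using A_sub by (auto simp: less_pairs_def)
      ultimately show ?thesis
        by (simp add: sum.distrib sum.If_cases finite_less_pairs)
    qed
    have "card A > 0" using False \<open>finite A\<close> by auto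
    then have IH: "(\<Sum>(j, j')\<in>less_pairs {..<F}. min (a' j) (a' j')) \<le> mod_sum F (\<Sum>j<F. a' j)"
      using less total by simp
    have "card (less_pairs A) \<le> (\<Sum>m<card A. ((\<Sum>j<F. a' j) + m) mod F)"
      using card_less_pairs[OF \<open>finite A\<close>] sum_mod_consecutive_ge[OF \<open>card A \<le> F\<close>] by simp
    then show ?thesis
      using IH mins total mod_sum_add[of F "\<Sum>j<F. a' j" "card A"] by simp
  qed
qed

lemma is_PDA_finite: "is_PDA S F K Z R \<Longrightarrow> finite S"
  unfolding is_PDA_def by (elim conjE)

lemma is_PDA_entry_in:
  assumes "is_PDA S F K Z R" "j < F" "k < K" "R j k = Some t"
  shows "t \<in> S"
proof -
  have "\<forall>j<F. \<forall>k<K. \<forall>t. R j k = Some t \<longrightarrow> t \<in> S"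
    using assms(1) unfolding is_PDA_def by (elim conjE)
  then show ?thesis using assms(2-4) by blast
qed

lemma is_PDA_card_empty:
  assumes "is_PDA S F K Z R" "k < K"
  shows "card {j. j < F \<and> R j k = None} = Z"
proof -
  have "\<forall>k<K. card {j. j < F \<and> R j k = None} = Z"
    using assms(1) unfolding is_PDA_def by (elim conjE)
  then show ?thesis using assms(2) by blast
qed

lemma is_PDA_cross_empty:
  assumes "is_PDA S F K Z R" "j1 < F" "j2 < F" "k1 < K" "k2 < K" "(j1, k1) \<noteq> (j2, k2)"
    "R j1 k1 = Some t" "R j2 k2 = Some t"
  shows "R j1 k2 = None" "R j2 k1 = None"
proof -
  have "\<forall>j1<F. \<forall>j2<F. \<forall>k1<K. \<forall>k2<K. \<forall>t. (j1, k1) \<noteq> (j2, k2)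
      \<and> R j1 k1 = Some t \<and> R j2 k2 = Some t \<longrightarrow> R j1 k2 = None \<and> R j2 k1 = None"
    using assms(1) unfolding is_PDA_def by (elim conjE)
  then show "R j1 k2 = None" "R j2 k1 = None"
    using assms(2-8) by blast+
qed

locale pda_single_gap =
  fixes S :: "nat set" and F K :: nat and R :: "nat \<Rightarrow> nat \<Rightarrow> nat option"
  assumes pda: "is_PDA S F K 1 R"
begin

definition gap :: "nat \<Rightarrow> nat" where
  "gap k = (THE j. j < F \<and> R j k = None)"

lemma gap:
  assumes "k < K"
  shows "gap k < F" and "R (gap k) k = None" and "j < F \<Longrightarrow> R j k = None \<longleftrightarrow> j = gap k"
proof -
  have "card {j. j < F \<and> R j k = None} = 1"
    using is_PDA_card_empty[OF pda assms] .
  then obtain j0 where j0: "{j. j < F \<and> R j k = None} = {j0}"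
    by (auto simp: card_1_singleton_iff)
  then have "gap k = j0"
    unfolding gap_def by (intro the_equality) blast+
  then show "gap k < F" "R (gap k) k = None" "j < F \<Longrightarrow> R j k = None \<longleftrightarrow> j = gap k"
    using j0 by auto
qed

text \<open>Cells are pairs (column, row).\<close>

definition filled :: "(nat \<times> nat) set" where
  "filled = {(k, j). k < K \<and> j < F \<and> R j k \<noteq> None}"

definition entry :: "nat \<times> nat \<Rightarrow> nat option" where
  "entry c = R (snd c) (fst c)"

lemma finite_filled: "finite filled"
  by (rule finite_subset[of _ "{..<K} \<times> {..<F}"]) (auto simp: filled_def)

lemma card_filled: "card filled = K * (F - 1)"
proof -
  have "(k, j) \<in> filled \<longleftrightarrow> k < K \<and> j < F \<and> j \<noteq> gap k" for k j
    using gap(3)[of k j] by (auto simp: filled_def)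
  then have "filled = (SIGMA k:{..<K}. {..<F} - {gap k})"
    by auto
  then show ?thesis
    using gap(1) by (simp add: card_SigmaI)
qed

lemma entry_in_symbols: "c \<in> filled \<Longrightarrow> entry c \<in> Some ` S"
  using is_PDA_entry_in[OF pda] by (force simp: filled_def entry_def)

lemma equal_entries:
  assumes "c \<in> filled" "d \<in> filled" "c \<noteq> d" "entry c = entry d"
  shows "snd c = gap (fst d)" "snd d = gap (fst c)" "fst c \<noteq> fst d" "snd c \<noteq> snd d"
proof -
  obtain k1 j1 k2 j2 where c: "c = (k1, j1)" and d: "d = (k2, j2)" by (cases c, cases d)
  have idx: "k1 < K" "j1 < F" "k2 < K" "j2 < F"
    using assms(1,2) c d by (simp_all add: filled_def)
  obtain t where t1: "R j1 k1 = Some t"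
    using assms(1) c by (auto simp: filled_def)
  have t2: "R j2 k2 = Some t"
    using assms(4) t1 c d by (simp add: entry_def)
  have "(j1, k1) \<noteq> (j2, k2)"
    using assms(3) c d by auto
  note empty = is_PDA_cross_empty[OF pda idx(2,4,1,3) this t1 t2]
  show "snd c = gap (fst d)" "snd d = gap (fst c)"
    using gap(3)[OF idx(3) idx(2)] gap(3)[OF idx(1) idx(4)] empty c d by simp_all
  show "fst c \<noteq> fst d" "snd c \<noteq> snd d"
    using empty t1 t2 c d by auto
qed

lemma entry_at_most_twice:
  assumes "c \<in> filled" "d \<in> filled" "f \<in> filled" "entry c = entry d" "entry d = entry f"
  shows "c = d \<or> c = f \<or> d = f"
proof (rule ccontr)
  assume "\<not> ?thesis"
  then have "c \<noteq> d" "c \<noteq> f" "d \<noteq> f" by simp_all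
  have "entry c = entry f" using assms(4,5) by simp
  have "snd d = gap (fst c)"
    using equal_entries(2)[OF assms(1,2) \<open>c \<noteq> d\<close> assms(4)] .
  moreover have "snd f = gap (fst c)"
    using equal_entries(2)[OF assms(1,3) \<open>c \<noteq> f\<close> \<open>entry c = entry f\<close>] .
  moreover have "snd d \<noteq> snd f"
    using equal_entries(4)[OF assms(2,3) \<open>d \<noteq> f\<close> assms(5)] .
  ultimately show False by simp
qed

definition matched :: "((nat \<times> nat) \<times> (nat \<times> nat)) set" where
  "matched = {(c, d). c \<in> filled \<and> d \<in> filled \<and> fst c < fst d \<and> entry c = entry d}"

lemma finite_matched: "finite matched"
  by (rule finite_subset[of _ "filled \<times> filled"]) (auto simp: matched_def finite_filled)

lemma matched_eqI:
  assumes "(c, d) \<in> matched" "(c', d') \<in> matched" "z \<in> {c, d}" "z \<in> {c', d'}"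
  shows "(c, d) = (c', d')"
proof -
  have cells: "c \<in> filled" "d \<in> filled" "c' \<in> filled" "d' \<in> filled"
    and order: "fst c < fst d" "fst c' < fst d'"
    and entries: "entry c = entry d" "entry c' = entry d'"
    using assms(1,2) by (auto simp: matched_def)
  have "entry c' = entry c" "entry d' = entry c"
    using assms(3,4) entries by auto
  moreover have "c \<noteq> d"
    using order(1) by auto
  ultimately have "c' = c \<or> c' = d" "d' = c \<or> d' = d"
    using entry_at_most_twice[OF cells(1,2,3) entries(1)] entry_at_most_twice[OF cells(1,2,4) entries(1)]
    by (metis entries(1))+
  then show ?thesis
    using order by auto
qed

lemma card_filled_le: "card filled \<le> card S + card matched"
proof -
  \<comment> \<open>Once the second cell of every matched pair is removed, the entries are pairwise distinct.\<close>
  have inj_snd: "inj_on snd matched"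
  proof (rule inj_onI)
    fix p q assume "p \<in> matched" "q \<in> matched" "snd p = snd q"
    then show "p = q"
      using matched_eqI[of "fst p" "snd p" "fst q" "snd q" "snd p"] by (simp add: prod_eq_iff)
  qed
  have inj_entry: "inj_on entry (filled - snd ` matched)"
  proof (rule inj_onI)
    fix c d assume c: "c \<in> filled - snd ` matched" and d: "d \<in> filled - snd ` matched"
      and "entry c = entry d"
    then have "(c, d) \<notin> matched" "(d, c) \<notin> matched" by force+
    then show "c = d"
      using equal_entries(3)[of c d] c d \<open>entry c = entry d\<close>
      by (auto simp: matched_def nat_neq_iff)
  qed
  have "card (filled - snd ` matched) \<le> card (Some ` S)"
    using card_inj_on_le[OF inj_entry] entry_in_symbols is_PDA_finite[OF pda] by blast
  moreover have "snd ` matched \<subseteq> filled"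
    by (auto simp: matched_def)
  ultimately show ?thesis
    using card_image[OF inj_snd] card_Diff_subset[of "snd ` matched" filled]
      card_mono[OF finite_filled, of "snd ` matched"] finite_subset[OF _ finite_filled]
    by (simp add: card_image)
qed

lemma matched_cells:
  assumes "(c, d) \<in> matched"
  shows "fst c < K" "fst d < K" "snd c = gap (fst d)" "snd d = gap (fst c)"
    "gap (fst c) \<noteq> gap (fst d)"
proof -
  have cells: "c \<in> filled" "d \<in> filled" "c \<noteq> d" "entry c = entry d"
    using assms by (auto simp: matched_def)
  then show "fst c < K" "fst d < K"
    by (auto simp: filled_def)
  show "snd c = gap (fst d)" "snd d = gap (fst c)"
    using equal_entries(1,2)[OF cells] by simp_all
  then show "gap (fst c) \<noteq> gap (fst d)"
    using equal_entries(4)[OF cells] by simp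
qed

definition gap_pair :: "(nat \<times> nat) \<times> (nat \<times> nat) \<Rightarrow> nat \<times> nat" where
  "gap_pair p = (let g = gap (fst (fst p)); h = gap (fst (snd p)) in (min g h, max g h))"

lemma gap_pair_in_less_pairs: "p \<in> matched \<Longrightarrow> gap_pair p \<in> less_pairs {..<F}"
  using matched_cells[of "fst p" "snd p"] gap(1)
  by (auto simp: gap_pair_def less_pairs_def Let_def min_def max_def)

lemma card_gap_pair_le:
  assumes "x \<in> {j, j'}"
  shows "card {p \<in> matched. gap_pair p = (j, j')} \<le> card {k \<in> {..<K}. gap k = x}"
proof -
  define M where "M = {p \<in> matched. gap_pair p = (j, j')}"
  define cell :: "(nat \<times> nat) \<times> (nat \<times> nat) \<Rightarrow> nat \<times> nat"
    where "cell p = (if gap (fst (fst p)) = x then fst p else snd p)" for p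
  have cell: "cell p \<in> {fst p, snd p}" "cell p \<in> {k \<in> {..<K}. gap k = x} \<times> {j + j' - x}"
    if "p \<in> M" for p
  proof -
    obtain c d where p: "p = (c, d)" by (cases p)
    have cd: "(c, d) \<in> matched" and gaps: "{gap (fst c), gap (fst d)} = {j, j'}"
      using that p by (auto simp: M_def gap_pair_def Let_def min_def max_def split: if_splits)
    note facts = matched_cells[OF cd]
    show "cell p \<in> {fst p, snd p}"
      by (simp add: cell_def)
    show "cell p \<in> {k \<in> {..<K}. gap k = x} \<times> {j + j' - x}"
      using assms gaps facts p by (auto simp: cell_def doubleton_eq_iff mem_Times_iff)
  qed
  have "inj_on cell M"
  proof (rule inj_onI)
    fix p q assume "p \<in> M" "q \<in> M" "cell p = cell q"
    then show "p = q"
      using cell(1)[of p] cell(1)[of q] matched_eqI[of "fst p" "snd p" "fst q" "snd q" "cell p"]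
      by (auto simp: M_def prod_eq_iff)
  qed
  moreover have "cell ` M \<subseteq> {k \<in> {..<K}. gap k = x} \<times> {j + j' - x}"
    using cell(2) by (rule image_subsetI)
  ultimately have "card M \<le> card ({k \<in> {..<K}. gap k = x} \<times> {j + j' - x})"
    by (rule card_inj_on_le) simp
  then show ?thesis
    by (simp add: M_def card_cartesian_product)
qed

lemma card_matched_le: "card matched \<le> mod_sum F K"
proof -
  define a where "a j = card {k \<in> {..<K}. gap k = j}" for j
  have "card matched = (\<Sum>q\<in>less_pairs {..<F}. card {p \<in> matched. gap_pair p = q})"
    using sum.group[OF finite_matched finite_less_pairs[of "{..<F}"], of gap_pair "\<lambda>_. 1::nat"]
      gap_pair_in_less_pairs by (simp add: image_subset_iff)
  also have "\<dots> \<le> (\<Sum>(j, j')\<in>less_pairs {..<F}. min (a j) (a j'))"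
    by (rule sum_mono) (use card_gap_pair_le in \<open>force simp: a_def\<close>)
  also have "\<dots> \<le> mod_sum F (\<Sum>j<F. a j)"
    by (rule sum_min_less_pairs_le_mod_sum)
  also have "(\<Sum>j<F. a j) = K"
    using sum.group[of "{..<K}" "{..<F}" gap "\<lambda>_. 1::nat"] gap(1) by (auto simp: a_def)
  finally show ?thesis .
qed

lemma card_symbols_ge: "K * (F - 1) - mod_sum F K \<le> card S"
  using card_filled card_filled_le card_matched_le by linarith

end

text \<open>
  In the cyclic array, column k has its gap in row k mod F, and the cell in row j of column k
  shares its symbol with the cell in row k mod F of column k div F * F + j, the column of the
  same block of F columns whose gap is row j.  The symbol is named by the (column, row) position
  of whichever of these two cells has its row index above the gap row of its column.
\<close>

definition cyclic_symbol :: "nat \<Rightarrow> nat \<Rightarrow> nat \<Rightarrow> nat \<times> nat" where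
  "cyclic_symbol F j k = (if k mod F < j then (k, j) else (k div F * F + j, k mod F))"

definition cyclic_array :: "nat \<Rightarrow> nat \<Rightarrow> nat \<Rightarrow> nat \<Rightarrow> nat option" where
  "cyclic_array F K j k =
     (if j < F \<and> k < K \<and> j \<noteq> k mod F then Some (prod_encode (cyclic_symbol F j k)) else None)"

definition cyclic_symbols :: "nat \<Rightarrow> nat \<Rightarrow> nat set" where
  "cyclic_symbols F K = prod_encode ` (SIGMA k:{..<K}. {k mod F<..<F})"

lemma cyclic_symbol_mem:
  assumes "j < F" "k < K" "j \<noteq> k mod F"
  shows "cyclic_symbol F j k \<in> (SIGMA k:{..<K}. {k mod F<..<F})"
proof (cases "k mod F < j")
  case False
  then have "k div F * F + j < k"
    using assms(3) div_mult_mod_eq[of k F] by linarith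
  then show ?thesis
    using False assms by (simp add: cyclic_symbol_def)
qed (use assms in \<open>simp add: cyclic_symbol_def\<close>)

lemma cyclic_symbol_eq:
  assumes "j1 < F" "j2 < F" "(j1, k1) \<noteq> (j2, k2)"
    and "cyclic_symbol F j1 k1 = cyclic_symbol F j2 k2"
  shows "j1 = k2 mod F \<and> j2 = k1 mod F"
proof -
  have block: "(q * F + j) mod F = j" "(q * F + j) div F = q" if "j < F" for q j
    using that by simp_all
  consider "k1 mod F < j1" "k2 mod F < j2" | "k1 mod F < j1" "\<not> k2 mod F < j2"
    | "\<not> k1 mod F < j1" "k2 mod F < j2" | "\<not> k1 mod F < j1" "\<not> k2 mod F < j2"
    by blast
  then show ?thesis
  proof cases
    case 1
    then show ?thesis using assms by (simp add: cyclic_symbol_def)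
  next
    case 2
    then show ?thesis using assms block(1)[OF assms(2)] by (auto simp: cyclic_symbol_def)
  next
    case 3
    then show ?thesis using assms block(1)[OF assms(1)] by (auto simp: cyclic_symbol_def)
  next
    case 4
    then have "k1 mod F = k2 mod F" "k1 div F * F + j1 = k2 div F * F + j2"
      using assms(4) by (simp_all add: cyclic_symbol_def)
    then have "j1 = j2" "k1 div F = k2 div F"
      using block[OF assms(1)] block[OF assms(2)] by metis+
    then have "k1 = k2"
      using \<open>k1 mod F = k2 mod F\<close> by (metis div_mult_mod_eq)
    then show ?thesis using \<open>j1 = j2\<close> assms(3) by simp
  qed
qed

lemma cyclic_array_cross_empty:
  assumes "j1 < F" "j2 < F" "(j1, k1) \<noteq> (j2, k2)"
    and "cyclic_array F K j1 k1 = Some t" "cyclic_array F K j2 k2 = Some t"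
  shows "cyclic_array F K j1 k2 = None \<and> cyclic_array F K j2 k1 = None"
proof -
  have "cyclic_symbol F j1 k1 = cyclic_symbol F j2 k2"
    using assms(4,5) inj_prod_encode[of UNIV] by (auto simp: cyclic_array_def inj_on_eq_iff split: if_splits)
  then show ?thesis
    using cyclic_symbol_eq[OF assms(1-3)] by (simp add: cyclic_array_def)
qed

lemma cyclic_array_is_PDA:
  assumes "0 < F"
  shows "is_PDA (cyclic_symbols F K) F K 1 (cyclic_array F K)"
  unfolding is_PDA_def
proof (intro conjI)
  show "finite (cyclic_symbols F K)"
    by (simp add: cyclic_symbols_def)
  show "\<forall>j<F. \<forall>k<K. \<forall>t. cyclic_array F K j k = Some t \<longrightarrow> t \<in> cyclic_symbols F K"
    using cyclic_symbol_mem by (auto simp: cyclic_array_def cyclic_symbols_def)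
  show "\<forall>k<K. card {j. j < F \<and> cyclic_array F K j k = None} = 1"
  proof (intro allI impI)
    fix k assume "k < K"
    then have "{j. j < F \<and> cyclic_array F K j k = None} = {k mod F}"
      using assms by (auto simp: cyclic_array_def)
    then show "card {j. j < F \<and> cyclic_array F K j k = None} = 1" by simp
  qed
  show "\<forall>t\<in>cyclic_symbols F K. \<forall>j<F. \<forall>k1<K. \<forall>k2<K.
      cyclic_array F K j k1 = Some t \<and> cyclic_array F K j k2 = Some t \<longrightarrow> k1 = k2"
  proof (intro ballI allI impI; elim conjE; rule ccontr)
    fix t j k1 k2 assume "j < F" "cyclic_array F K j k1 = Some t" "cyclic_array F K j k2 = Some t"
      "k1 \<noteq> k2"
    then show False
      using cyclic_array_cross_empty[of j F j k1 k2] by simp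
  qed
  show "\<forall>t\<in>cyclic_symbols F K. \<forall>k<K. \<forall>j1<F. \<forall>j2<F.
      cyclic_array F K j1 k = Some t \<and> cyclic_array F K j2 k = Some t \<longrightarrow> j1 = j2"
  proof (intro ballI allI impI; elim conjE; rule ccontr)
    fix t k j1 j2 assume "j1 < F" "j2 < F" "cyclic_array F K j1 k = Some t"
      "cyclic_array F K j2 k = Some t" "j1 \<noteq> j2"
    then show False
      using cyclic_array_cross_empty[of j1 F j2 k k] by simp
  qed
  show "\<forall>j1<F. \<forall>j2<F. \<forall>k1<K. \<forall>k2<K. \<forall>t. (j1, k1) \<noteq> (j2, k2)
      \<and> cyclic_array F K j1 k1 = Some t \<and> cyclic_array F K j2 k2 = Some t
      \<longrightarrow> cyclic_array F K j1 k2 = None \<and> cyclic_array F K j2 k1 = None"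
    using cyclic_array_cross_empty by blast
qed

lemma card_cyclic_symbols:
  assumes "0 < F"
  shows "card (cyclic_symbols F K) = K * (F - 1) - mod_sum F K"
proof -
  have "card (cyclic_symbols F K) = (\<Sum>k<K. card {k mod F<..<F})"
    by (simp add: cyclic_symbols_def card_image inj_prod_encode card_SigmaI)
  also have "\<dots> = (\<Sum>k<K. (F - 1) - k mod F)"
    by simp
  also have "\<dots> = (\<Sum>k<K. F - 1) - mod_sum F K"
    unfolding mod_sum_def
    by (rule sum_subtractf_nat) (use assms in \<open>auto simp: less_Suc_eq_le[symmetric]\<close>)
  finally show ?thesis by simp
qed

lemma s_PDA_single_gap:
  assumes "0 < F"
  shows "s_PDA F K 1 = K * (F - 1) - mod_sum F K"
  unfolding s_PDA_def
proof (rule Least_equality)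
  show "\<exists>(S :: nat set) R. is_PDA S F K 1 R \<and> card S = K * (F - 1) - mod_sum F K"
    using cyclic_array_is_PDA[OF assms] card_cyclic_symbols[OF assms] by blast
  show "K * (F - 1) - mod_sum F K \<le> n" if "\<exists>(S :: nat set) R. is_PDA S F K 1 R \<and> card S = n" for n
    using that pda_single_gap.card_symbols_ge[unfolded pda_single_gap_def] by blast
qed

theorem mainTheorem12:
  fixes F K l i :: nat
  assumes "F \<ge> 2" and "K \<ge> 1" and "K = l * F + i" and "i < F"
  shows "real (s_PDA F K 1) =
           real l * real F * (real F - 1) / 2 + real i * (real i - 1) / 2 + real i * (real F - real i)"
proof -
  have "0 < F" using assms(1) by simp
  then have "real (s_PDA F K 1) = real K * (real F - 1) - real (mod_sum F K)"
    using s_PDA_single_gap mod_sum_le by (simp add: of_nat_diff)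
  also have "\<dots> = (real l * real F + real i) * (real F - 1)
      - (real l * real F * (real F - 1) / 2 + real i * (real i - 1) / 2)"
    using real_mod_sum[OF assms(4)] assms(3) by simp
  finally show ?thesis
    by (simp add: field_simps)
qed

end
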